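(* Let $(X_j,Y_j,S_j)$, $j\in\mathbb{Z}$, be a FAIM process, and let $\Delta H_n=H_n-\hat H_n$. Then $\lim_{n\to\infty}\mathbb{E}[\Delta H_n]=0$.
   Context: FAIM process: $(X_j,Y_j,S_j)$, $j\in\mathbb{Z}$, is strictly stationary, $X_j\in\{0,1\}$, $Y_j$ takes values in a finite alphabet, $S_j$ in a finite set $\mathcal{S}$; the conditional law $P_{X_j,Y_j,S_j|S_{j-1}}$ does not depend on $j$; and conditioned on $S_{j-1}$, $\{X_k,Y_k,S_k\}_{k\ge j}$ is independent of $\{X_l,Y_l,S_{l-1}\}_{l<j}$. The state sequence $(S_j)$ is a homogeneous, finite-state, stationary, aperiodic and irreducible Markov chain. Polarization setup: $N=2^n$, $G_N=B_NG_2^{\otimes n}$ with $G_2=\begin{bmatrix}1&0\\1&1\end{bmatrix}$ and $B_N$ the bit-reversal permutation matrix (arithmetic mod 2); $U_1^N=X_1^NG_N$, $Q_i=(U_1^{i-1},Y_1^N)$; $B_1,B_2,\dots$ i.i.d. Bernoulli$(1/2)$ and $i-1=\sum_{j=1}^nB_j2^{n-j}$. With $H(\cdot|\cdot)$ the conditional entropy in bits, $H_n=H(U_i|Q_i)$ and $\hat H_n=H(U_i|Q_i,S_N,S_0)$. *)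

theory Defs
  imports "HOL-Probability.Probability"
begin

definition pr :: "'w measure \<Rightarrow> ('w \<Rightarrow> 'a) \<Rightarrow> 'a \<Rightarrow> real" where
  "pr M A a = measure M {w \<in> space M. A w = a}"

definition cond_entropy :: "'w measure \<Rightarrow> ('w \<Rightarrow> 'a) \<Rightarrow> ('w \<Rightarrow> 'b) \<Rightarrow> real" where
  "cond_entropy M A B =
     - (\<Sum>(a, b) \<in> (\<lambda>w. (A w, B w)) ` space M.
          pr M (\<lambda>w. (A w, B w)) (a, b) *
          log 2 (pr M (\<lambda>w. (A w, B w)) (a, b) / pr M B b))"

fun bitrev :: "nat \<Rightarrow> nat \<Rightarrow> nat" where
  "bitrev 0 i = 0"
| "bitrev (Suc n) i = (i mod 2) * 2 ^ n + bitrev n (i div 2)"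

text \<open>Entries of G_2 = [[1,0],[1,1]] (True = 1).\<close>
definition G2 :: "nat \<Rightarrow> nat \<Rightarrow> bool" where
  "G2 r c = (\<not> (r = 0 \<and> c = 1))"

text \<open>Entries of the Kronecker power G_2^{\<otimes>n}, with G_2^{\<otimes>(n+1)} = G_2 \<otimes> G_2^{\<otimes>n}.\<close>
fun kronG2 :: "nat \<Rightarrow> nat \<Rightarrow> nat \<Rightarrow> bool" where
  "kronG2 0 i j = True"
| "kronG2 (Suc n) i j = (G2 (i div 2 ^ n) (j div 2 ^ n) \<and> kronG2 n (i mod 2 ^ n) (j mod 2 ^ n))"

text \<open>Entries of G_N = B_N G_2^{\<otimes>n}; B_N is the bit-reversal permutation matrix.\<close>
definition polarG :: "nat \<Rightarrow> nat \<Rightarrow> nat \<Rightarrow> bool" where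
  "polarG n i j = kronG2 n (bitrev n i) j"

text \<open>Component j (0-indexed) of u = x G_N over GF(2), x given 0-indexed.\<close>
definition polar_u :: "nat \<Rightarrow> (nat \<Rightarrow> bool) \<Rightarrow> nat \<Rightarrow> bool" where
  "polar_u n x j = odd (card {i. i < 2 ^ n \<and> x i \<and> polarG n i j})"

definition ev :: "'w measure \<Rightarrow> ('w \<Rightarrow> bool) \<Rightarrow> real" where
  "ev M P = measure M {w \<in> space M. P w}"

definition FAIM ::
  "'w measure \<Rightarrow> (int \<Rightarrow> 'w \<Rightarrow> bool) \<Rightarrow> (int \<Rightarrow> 'w \<Rightarrow> 'y::finite) \<Rightarrow> (int \<Rightarrow> 'w \<Rightarrow> 's::finite) \<Rightarrow> bool"
where
  "FAIM M X Y S \<longleftrightarrow>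
     prob_space M \<and>
     (\<forall>j. X j \<in> measurable M (count_space UNIV) \<and> Y j \<in> measurable M (count_space UNIV)
          \<and> S j \<in> measurable M (count_space UNIV)) \<and>
     \<comment> \<open>strict stationarity of (X_j, Y_j, S_j)\<close>
     (\<forall>(a::int) (m::nat) v. ev M (\<lambda>w. \<forall>i<m. (X (a + int i) w, Y (a + int i) w, S (a + int i) w) = v i)
                          = ev M (\<lambda>w. \<forall>i<m. (X (int i) w, Y (int i) w, S (int i) w) = v i)) \<and>
     \<comment> \<open>P(X_j,Y_j,S_j | S_{j-1}) does not depend on j (cross-multiplied form)\<close>
     (\<forall>j k x y s s'.
        ev M (\<lambda>w. X j w = x \<and> Y j w = y \<and> S j w = s \<and> S (j - 1) w = s') * ev M (\<lambda>w. S (k - 1) w = s')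
      = ev M (\<lambda>w. X k w = x \<and> Y k w = y \<and> S k w = s \<and> S (k - 1) w = s') * ev M (\<lambda>w. S (j - 1) w = s')) \<and>
     \<comment> \<open>given S_{j-1}, {X_k,Y_k,S_k}_{k\<ge>j} is independent of {X_l,Y_l,S_{l-1}}_{l<j}
         (stated on all finite-dimensional cylinder events)\<close>
     (\<forall>j (m::nat) (n::nat) f g s.
        ev M (\<lambda>w. (\<forall>i<m. (X (j + int i) w, Y (j + int i) w, S (j + int i) w) = f i)
                 \<and> (\<forall>i<n. (X (j - 1 - int i) w, Y (j - 1 - int i) w, S (j - 2 - int i) w) = g i)
                 \<and> S (j - 1) w = s) * ev M (\<lambda>w. S (j - 1) w = s)
      = ev M (\<lambda>w. (\<forall>i<m. (X (j + int i) w, Y (j + int i) w, S (j + int i) w) = f i) \<and> S (j - 1) w = s)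
        * ev M (\<lambda>w. (\<forall>i<n. (X (j - 1 - int i) w, Y (j - 1 - int i) w, S (j - 2 - int i) w) = g i)
                     \<and> S (j - 1) w = s)) \<and>
     \<comment> \<open>the (stationary, homogeneous) state chain is irreducible\<close>
     (\<forall>s s'. \<exists>n::nat. n > 0 \<and> ev M (\<lambda>w. S 0 w = s \<and> S (int n) w = s') > 0) \<and>
     \<comment> \<open>and aperiodic\<close>
     (\<forall>s. Gcd {n::nat. n > 0 \<and> ev M (\<lambda>w. S 0 w = s \<and> S (int n) w = s) > 0} = 1)"

text \<open>U_{k+1} (k 0-indexed), N = 2^n, U_1^N = X_1^N G_N.\<close>
definition Uvar :: "nat \<Rightarrow> (int \<Rightarrow> 'w \<Rightarrow> bool) \<Rightarrow> nat \<Rightarrow> 'w \<Rightarrow> bool" where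
  "Uvar n X k w = polar_u n (\<lambda>i. X (int i + 1) w) k"

text \<open>Q_{k+1} = (U_1^{k}, Y_1^N).\<close>
definition Qvar :: "nat \<Rightarrow> (int \<Rightarrow> 'w \<Rightarrow> bool) \<Rightarrow> (int \<Rightarrow> 'w \<Rightarrow> 'y) \<Rightarrow> nat \<Rightarrow> 'w \<Rightarrow> bool list \<times> 'y list" where
  "Qvar n X Y k w = (map (\<lambda>l. Uvar n X l w) [0..<k], map (\<lambda>l. Y (int l + 1) w) [0..<2 ^ n])"

text \<open>E[H_n] and E[\<hat>H_n]: the index i is uniform on {1..N} since i-1 = \<Sum> B_j 2^{n-j}.\<close>
definition EH :: "'w measure \<Rightarrow> (int \<Rightarrow> 'w \<Rightarrow> bool) \<Rightarrow> (int \<Rightarrow> 'w \<Rightarrow> 'y) \<Rightarrow> nat \<Rightarrow> real" where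
  "EH M X Y n = (\<Sum>k<2 ^ n. cond_entropy M (Uvar n X k) (Qvar n X Y k)) / 2 ^ n"

definition EHhat :: "'w measure \<Rightarrow> (int \<Rightarrow> 'w \<Rightarrow> bool) \<Rightarrow> (int \<Rightarrow> 'w \<Rightarrow> 'y) \<Rightarrow> (int \<Rightarrow> 'w \<Rightarrow> 's) \<Rightarrow> nat \<Rightarrow> real" where
  "EHhat M X Y S n = (\<Sum>k<2 ^ n. cond_entropy M (Uvar n X k)
                         (\<lambda>w. (Qvar n X Y k w, S (2 ^ n) w, S 0 w))) / 2 ^ n"

end

theory Submission
  imports Defs
begin

text \<open>Write \<open>Z = (S_N, S_0)\<close>. The chain rule gives
  \<open>H(U_i|Q_i) - H(U_i|Q_i,Z) = H(Z|Q_i) - H(Z|Q_{i+1})\<close>, because \<open>Q_{i+1}\<close> is \<open>Q_i\<close> extended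
  by \<open>U_i\<close>. Summing over \<open>i\<close> telescopes, so \<open>N \<cdot> E[\<Delta>H_n] = H(Z|Q_1) - H(Z|Q_{N+1})\<close> lies
  between \<open>0\<close> and a bound depending only on \<open>|\<S>|\<close>; hence \<open>E[\<Delta>H_n] = O(1/N)\<close>.\<close>

definition entropy_bits :: "'w measure \<Rightarrow> ('w \<Rightarrow> 'a) \<Rightarrow> real" where
  "entropy_bits M f = - (\<Sum>v\<in>f ` space M. pr M f v * log 2 (pr M f v))"

lemma mult_log_divide_split:
  fixes p q :: real
  assumes "0 \<le> p" "p \<le> q"
  shows "p * log 2 (p / q) = p * log 2 p - p * log 2 q"
  using assms by (cases "p = 0") (simp_all add: log_divide algebra_simps)

lemma mult_log_divide_nonpos:
  fixes p q :: real
  assumes "0 \<le> p" "p \<le> q"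
  shows "p * log 2 (p / q) \<le> 0"
proof (cases "p = 0")
  case False
  with assms have "0 < p" "0 < q" by linarith+
  with assms have "log 2 (p / q) \<le> 0" by simp
  with \<open>0 < p\<close> show ?thesis by (simp add: mult_nonneg_nonpos)
qed simp

lemma minus_mult_log_divide_le:
  fixes p q :: real
  assumes "0 \<le> p" "p \<le> q"
  shows "- (p * log 2 (p / q)) \<le> q / ln 2"
proof (cases "p = 0")
  case False
  with assms have p: "0 < p" and q: "0 < q" by linarith+
  have "p * ln (q / p) \<le> p * (q / p - 1)"
    using p q by (intro mult_left_mono ln_le_minus_one) auto
  also have "\<dots> \<le> q" using p by (simp add: field_simps)
  finally have "p * ln (q / p) \<le> q" .
  moreover have "- (p * log 2 (p / q)) = p * ln (q / p) / ln 2"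
    using p q by (simp add: log_def ln_div field_simps)
  ultimately show ?thesis by (simp add: divide_right_mono)
qed (use assms in simp)

lemma simple_function_map:
  assumes "\<And>i. i \<in> set L \<Longrightarrow> simple_function M (f i)"
  shows "simple_function M (\<lambda>w. map (\<lambda>i. f i w) L)"
  using assms
proof (induction L)
  case (Cons x L)
  have "simple_function M (\<lambda>w. (\<lambda>(a, l). a # l) (f x w, map (\<lambda>i. f i w) L))"
    by (rule simple_function_compose1[OF simple_function_Pair]) (use Cons in auto)
  then show ?case by simp
qed simp

lemma simple_function_finite_type:
  "f \<in> measurable M (count_space UNIV) \<Longrightarrow> simple_function M (f :: _ \<Rightarrow> 'a::finite)"
  by (simp add: simple_function_eq_measurable)

lemma pr_vimage: "pr M f v = measure M (f -` {v} \<inter> space M)"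
  unfolding pr_def by (intro arg_cong[where f="measure M"]) auto

context prob_space
begin

lemma pr_compose:
  assumes "simple_function M f"
  shows "pr M (\<lambda>w. h (f w)) u = (\<Sum>v\<in>{v\<in>f ` space M. h v = u}. pr M f v)"
proof -
  have fibres: "(\<lambda>w. h (f w)) -` {u} \<inter> space M = (\<Union>v\<in>{v\<in>f ` space M. h v = u}. f -` {v} \<inter> space M)"
    by auto
  show ?thesis
    unfolding pr_vimage fibres using simple_functionD[OF assms]
    by (intro finite_measure_finite_Union) (auto simp: disjoint_family_on_def)
qed

lemma sum_pr_eq_1:
  assumes "simple_function M f"
  shows "(\<Sum>v\<in>f ` space M. pr M f v) = 1"
  using pr_compose[OF assms, of "\<lambda>_. ()" "()"] prob_space by (simp add: pr_def)

lemma sum_pr_compose: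
  assumes f: "simple_function M f"
  shows "(\<Sum>v\<in>f ` space M. pr M f v * g (h v)) =
         (\<Sum>u\<in>(\<lambda>w. h (f w)) ` space M. pr M (\<lambda>w. h (f w)) u * g u)"
proof -
  have "(\<lambda>w. h (f w)) ` space M = h ` f ` space M" by auto
  then have "(\<Sum>u\<in>(\<lambda>w. h (f w)) ` space M. pr M (\<lambda>w. h (f w)) u * g u)
      = (\<Sum>u\<in>h ` f ` space M. \<Sum>v\<in>{v\<in>f ` space M. h v = u}. pr M f v * g (h v))"
    by (auto simp: pr_compose[OF f] sum_distrib_right intro!: sum.cong)
  also have "\<dots> = (\<Sum>v\<in>f ` space M. pr M f v * g (h v))"
    using simple_functionD(1)[OF f] by (intro sum.group) auto
  finally show ?thesis by simp
qed

lemma entropy_bits_compose_inj: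
  assumes f: "simple_function M f" and inj: "inj_on h (f ` space M)"
  shows "entropy_bits M (\<lambda>w. h (f w)) = entropy_bits M f"
proof -
  have pr_h: "pr M (\<lambda>w. h (f w)) (h v) = pr M f v" if "v \<in> f ` space M" for v
  proof -
    have "{w\<in>space M. h (f w) = h v} = {w\<in>space M. f w = v}"
      using inj that by (auto dest: inj_onD)
    then show ?thesis unfolding pr_def by simp
  qed
  have "entropy_bits M f = - (\<Sum>v\<in>f ` space M. pr M f v * log 2 (pr M (\<lambda>w. h (f w)) (h v)))"
    unfolding entropy_bits_def by (intro arg_cong[where f=uminus] sum.cong) (simp_all add: pr_h)
  also have "\<dots> = entropy_bits M (\<lambda>w. h (f w))"
    using sum_pr_compose[OF f, of "\<lambda>u. log 2 (pr M (\<lambda>w. h (f w)) u)" h]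
    by (simp only: entropy_bits_def)
  finally show ?thesis by simp
qed

lemma pr_Pair_bounds:
  assumes "simple_function M B"
  shows "0 \<le> pr M (\<lambda>w. (A w, B w)) (a, b)" and "pr M (\<lambda>w. (A w, B w)) (a, b) \<le> pr M B b"
  using assms unfolding pr_vimage
  by (auto intro!: finite_measure_mono simple_functionD)

lemma cond_entropy_chain_rule:
  assumes A: "simple_function M A" and B: "simple_function M B"
  shows "cond_entropy M A B = entropy_bits M (\<lambda>w. (A w, B w)) - entropy_bits M B"
proof -
  let ?P = "\<lambda>w. (A w, B w)"
  have "pr M ?P (a, b) * log 2 (pr M ?P (a, b) / pr M B b) =
      pr M ?P (a, b) * log 2 (pr M ?P (a, b)) - pr M ?P (a, b) * log 2 (pr M B b)" for a b
    using pr_Pair_bounds[OF B] by (rule mult_log_divide_split)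
  then have split: "cond_entropy M A B =
      - (\<Sum>v\<in>?P ` space M. pr M ?P v * log 2 (pr M ?P v) - pr M ?P v * log 2 (pr M B (snd v)))"
    unfolding cond_entropy_def by (simp add: case_prod_beta)
  have marginal: "(\<Sum>v\<in>?P ` space M. pr M ?P v * log 2 (pr M B (snd v))) =
      (\<Sum>u\<in>B ` space M. pr M B u * log 2 (pr M B u))"
    using sum_pr_compose[OF simple_function_Pair[OF A B], of "\<lambda>b. log 2 (pr M B b)" snd] by simp
  show ?thesis
    unfolding entropy_bits_def split sum_subtractf marginal by simp
qed

lemma cond_entropy_nonneg:
  assumes "simple_function M B"
  shows "0 \<le> cond_entropy M A B"
  unfolding cond_entropy_def
  by (auto simp: case_prod_beta intro!: sum_nonpos mult_log_divide_nonpos pr_Pair_bounds[OF assms])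

lemma cond_entropy_le_card:
  assumes A: "simple_function M A" and B: "simple_function M B"
  shows "cond_entropy M A B \<le> card (A ` space M) / ln 2"
proof -
  let ?P = "\<lambda>w. (A w, B w)"
  have "cond_entropy M A B = (\<Sum>(a, b)\<in>?P ` space M. - (pr M ?P (a, b) * log 2 (pr M ?P (a, b) / pr M B b)))"
    unfolding cond_entropy_def by (simp add: sum_negf case_prod_beta)
  also have "\<dots> \<le> (\<Sum>(a, b)\<in>?P ` space M. pr M B b / ln 2)"
    by (auto intro!: sum_mono minus_mult_log_divide_le pr_Pair_bounds[OF B])
  also have "\<dots> \<le> (\<Sum>(a, b)\<in>A ` space M \<times> B ` space M. pr M B b / ln 2)"
    using simple_functionD(1)[OF A] simple_functionD(1)[OF B]
    by (intro sum_mono2) (auto simp: pr_def)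
  also have "\<dots> = card (A ` space M) * ((\<Sum>b\<in>B ` space M. pr M B b) / ln 2)"
    by (simp add: sum.cartesian_product[symmetric] sum_divide_distrib)
  also have "\<dots> = card (A ` space M) / ln 2"
    using sum_pr_eq_1[OF B] by simp
  finally show ?thesis .
qed

text \<open>Both sides are the conditional mutual information \<open>I(U; Z | Q)\<close>, expanded by the chain rule.\<close>

lemma cond_entropy_reduction_swap:
  assumes U: "simple_function M U" and Q: "simple_function M Q" and Z: "simple_function M Z"
    and inj: "inj h"
  shows "cond_entropy M U Q - cond_entropy M U (\<lambda>w. (Q w, Z w))
       = cond_entropy M Z Q - cond_entropy M Z (\<lambda>w. h (U w, Q w))"
proof -
  have UQ': "simple_function M (\<lambda>w. h (U w, Q w))"
    using U Q by (rule simple_function_compose1[OF simple_function_Pair])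
  have "entropy_bits M (\<lambda>w. prod.swap (Q w, Z w)) = entropy_bits M (\<lambda>w. (Q w, Z w))"
    using Q Z by (intro entropy_bits_compose_inj) auto
  moreover have "entropy_bits M (\<lambda>w. (\<lambda>(u, q, z). (z, h (u, q))) (U w, Q w, Z w))
      = entropy_bits M (\<lambda>w. (U w, Q w, Z w))"
    using U Q Z inj by (intro entropy_bits_compose_inj) (auto simp: inj_on_def inj_def)
  moreover have "entropy_bits M (\<lambda>w. h (U w, Q w)) = entropy_bits M (\<lambda>w. (U w, Q w))"
    using U Q inj by (intro entropy_bits_compose_inj) (auto simp: inj_on_def inj_def)
  ultimately show ?thesis
    using cond_entropy_chain_rule[OF U Q] cond_entropy_chain_rule[OF U simple_function_Pair[OF Q Z]]
      cond_entropy_chain_rule[OF Z Q] cond_entropy_chain_rule[OF Z UQ']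
    by simp
qed

lemma sum_cond_entropy_reduction_bounded:
  assumes U: "\<And>k. simple_function M (U k)" and Q: "\<And>k. simple_function M (Q k)"
    and Z: "simple_function M Z"
    and inj: "inj h" and Q_Suc: "\<And>k w. Q (Suc k) w = h (U k w, Q k w)"
  shows "\<bar>\<Sum>k<m. cond_entropy M (U k) (Q k) - cond_entropy M (U k) (\<lambda>w. (Q k w, Z w))\<bar>
           \<le> card (Z ` space M) / ln 2"
proof -
  define c where "c k = cond_entropy M Z (Q k)" for k
  have c_bounds: "0 \<le> c k \<and> c k \<le> card (Z ` space M) / ln 2" for k
    unfolding c_def using cond_entropy_nonneg[OF Q] cond_entropy_le_card[OF Z Q] by simp
  have "Q (Suc k) = (\<lambda>w. h (U k w, Q k w))" for k
    using Q_Suc by auto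
  then have "(\<Sum>k<m. cond_entropy M (U k) (Q k) - cond_entropy M (U k) (\<lambda>w. (Q k w, Z w)))
      = (\<Sum>k<m. c k - c (Suc k))"
    unfolding c_def using cond_entropy_reduction_swap[OF U Q Z inj] by simp
  also have "\<dots> = c 0 - c m"
    by (rule sum_lessThan_telescope')
  finally show ?thesis
    unfolding abs_le_iff using c_bounds[of 0] c_bounds[of m] by linarith
qed

end

lemma simple_function_Uvar:
  assumes "\<And>j. simple_function M (X j)"
  shows "simple_function M (Uvar n X k)"
proof -
  have "simple_function M
      (\<lambda>w. (\<lambda>xs. polar_u n (\<lambda>i. xs ! i) k) (map (\<lambda>i. X (int i + 1) w) [0..<2 ^ n]))"
    using assms by (rule simple_function_compose1[OF simple_function_map])
  moreover have "polar_u n (\<lambda>i. map (\<lambda>i. X (int i + 1) w) [0..<2 ^ n] ! i) k = Uvar n X k w" for w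
    unfolding Uvar_def polar_u_def by (rule arg_cong[where f="\<lambda>A. odd (card A)"]) auto
  ultimately show ?thesis by simp
qed

lemma simple_function_Qvar:
  assumes "\<And>j. simple_function M (X j)" and "\<And>j. simple_function M (Y j)"
  shows "simple_function M (Qvar n X Y k)"
  unfolding Qvar_def[abs_def] using assms
  by (intro simple_function_Pair simple_function_map simple_function_Uvar)

lemma Qvar_Suc:
  "Qvar n X Y (Suc k) w = (\<lambda>(u, us, ys). (us @ [u], ys)) (Uvar n X k w, Qvar n X Y k w)"
  unfolding Qvar_def by simp

theorem lemma6:
  fixes M :: "'w measure"
    and X :: "int \<Rightarrow> 'w \<Rightarrow> bool"
    and Y :: "int \<Rightarrow> 'w \<Rightarrow> 'y::finite"
    and S :: "int \<Rightarrow> 'w \<Rightarrow> 's::finite"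
  assumes "FAIM M X Y S"
  shows "(\<lambda>n. EH M X Y n - EHhat M X Y S n) \<longlonglongrightarrow> 0"
proof -
  interpret prob_space M using assms unfolding FAIM_def by simp
  have X: "\<And>j. simple_function M (X j)" and Y: "\<And>j. simple_function M (Y j)"
    and S: "\<And>j. simple_function M (S j)"
    using assms unfolding FAIM_def by (auto intro: simple_function_finite_type)
  define K where "K = real (CARD('s \<times> 's)) / ln 2"
  have bound: "norm (EH M X Y n - EHhat M X Y S n) \<le> K * (1 / 2) ^ n" for n
  proof -
    let ?Z = "\<lambda>w. (S (2 ^ n) w, S 0 w)"
    have "card (?Z ` space M) / ln 2 \<le> K"
      unfolding K_def by (intro divide_right_mono of_nat_mono card_mono) simp_all
    moreover have "\<bar>\<Sum>k<2 ^ n. cond_entropy M (Uvar n X k) (Qvar n X Y k)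
        - cond_entropy M (Uvar n X k) (\<lambda>w. (Qvar n X Y k w, ?Z w))\<bar> \<le> card (?Z ` space M) / ln 2"
      using X Y S Qvar_Suc
      by (intro sum_cond_entropy_reduction_bounded[where h="\<lambda>(u, us, ys). (us @ [u], ys)"]
          simple_function_Uvar simple_function_Qvar simple_function_Pair) (auto simp: inj_def)
    ultimately show ?thesis
      unfolding EH_def EHhat_def
      by (simp add: sum_subtractf[symmetric] diff_divide_distrib[symmetric] power_one_over
          divide_right_mono)
  qed
  have "(\<lambda>n. K * (1 / 2 :: real) ^ n) \<longlonglongrightarrow> 0"
    by (intro tendsto_mult_right_zero LIMSEQ_power_zero) simp
  then show ?thesis
    by (rule Lim_null_comparison[rotated]) (use bound in auto)
qed

end
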